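(* Let $0<\alpha<1$ and $c>0$. With probability 1 there exists $n_0(\omega)$ such that for all $n\ge n_0$, all integers $0\le j\le n-n^\alpha$ and all integers $x$ with $|x|\le c\log n$, $$\xi(S_j+x,n)=\xi(S_j+x,\infty).$$
   Context: Let $0<q<p<1$ with $p+q=1$. Let $X_1,X_2,\dots$ be i.i.d. with $\mathbf P(X_1=1)=p$, $\mathbf P(X_1=-1)=q$, $S_0=0$, $S_n=X_1+\dots+X_n$. For $y\in\mathbb Z$, $n\ge1$, $\xi(y,n)=\#\{k:0<k\le n,\ S_k=y\}$ and $\xi(y,\infty)=\lim_n\xi(y,n)$. *)

theory Defs
  imports "HOL-Probability.Probability"
begin

text \<open>Partial sums S_n = X_1 + ... + X_n (S_0 = 0); the steps are indexed from 1.\<close>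
definition walk :: "(nat \<Rightarrow> 'a \<Rightarrow> int) \<Rightarrow> nat \<Rightarrow> 'a \<Rightarrow> int" where
  "walk X n \<omega> = (\<Sum>k\<in>{1..n}. X k \<omega>)"

definition loctime :: "(nat \<Rightarrow> 'a \<Rightarrow> int) \<Rightarrow> int \<Rightarrow> nat \<Rightarrow> 'a \<Rightarrow> nat" where
  "loctime X y n \<omega> = card {k. 0 < k \<and> k \<le> n \<and> walk X k \<omega> = y}"

text \<open>xi(y,infinity) = lim_n xi(y,n), the limit of a nondecreasing sequence, in enat.\<close>
definition loctime_inf :: "(nat \<Rightarrow> 'a \<Rightarrow> int) \<Rightarrow> int \<Rightarrow> 'a \<Rightarrow> enat" where
  "loctime_inf X y \<omega> = (SUP n. enat (loctime X y n \<omega>))"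

end

theory Submission
  imports Defs "HOL-Real_Asymp.Real_Asymp"
begin

text \<open>Since the walk has positive drift \<open>p - q\<close>, Hoeffding's inequality makes the event that the
  increment \<open>S\<^sub>k - S\<^sub>j\<close> stays below \<open>c log k\<close> over a stretch of length at least \<open>(k/2)\<^sup>\<alpha>\<close>
  exponentially unlikely in \<open>(k/2)\<^sup>\<alpha>\<close>; summing over the \<open>k + 1\<close> starting points \<open>j\<close> still gives a
  summable sequence, so by Borel--Cantelli almost surely, for all large \<open>k\<close>, every such increment
  exceeds \<open>c log k\<close>. If \<open>j \<le> n - n\<^sup>\<alpha>\<close> and \<open>k > n\<close> then \<open>k - j \<ge> (k/2)\<^sup>\<alpha>\<close>, hence
  \<open>S\<^sub>k > S\<^sub>j + c log n \<ge> S\<^sub>j + x\<close>: the walk never revisits \<open>S\<^sub>j + x\<close> after time \<open>n\<close>.\<close>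

lemma walk_diff:
  assumes "j \<le> k"
  shows "walk X k \<omega> - walk X j \<omega> = (\<Sum>i\<in>{Suc j..k}. X i \<omega>)"
  using assms
proof (induction k rule: dec_induct)
  case (step k)
  have "walk X (Suc k) \<omega> = walk X k \<omega> + X (Suc k) \<omega>"
    by (simp add: walk_def)
  moreover have "(\<Sum>i\<in>{Suc j..Suc k}. X i \<omega>) = (\<Sum>i\<in>{Suc j..k}. X i \<omega>) + X (Suc k) \<omega>"
    using step.hyps by (simp add: sum.cl_ivl_Suc)
  ultimately show ?case using step.IH by simp
qed simp

lemma loctime_inf_eq_loctime_if_no_later_visit:
  assumes "\<And>k. n < k \<Longrightarrow> walk X k \<omega> \<noteq> y"
  shows "loctime_inf X y \<omega> = enat (loctime X y n \<omega>)"
proof (rule antisym)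
  have "loctime X y m \<omega> \<le> loctime X y n \<omega>" for m
    unfolding loctime_def
  proof (rule card_mono)
    show "finite {k. 0 < k \<and> k \<le> n \<and> walk X k \<omega> = y}"
      by (rule finite_subset[of _ "{..n}"]) auto
  qed (use assms in \<open>auto simp: not_less[symmetric]\<close>)
  then show "loctime_inf X y \<omega> \<le> enat (loctime X y n \<omega>)"
    unfolding loctime_inf_def by (intro SUP_least) auto
  show "enat (loctime X y n \<omega>) \<le> loctime_inf X y \<omega>"
    unfolding loctime_inf_def by (rule SUP_upper) auto
qed

lemma half_powr_le_gap:
  fixes \<alpha> :: real
  assumes "0 < \<alpha>" "\<alpha> < 1" "2 \<le> n" "n < k" "real j \<le> real n - real n powr \<alpha>"
  shows "(real k / 2) powr \<alpha> \<le> real (k - j)"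
proof -
  have "j \<le> n"
    using assms(5) powr_ge_zero[of "real n" \<alpha>] by linarith
  show ?thesis
  proof (cases "real k / 2 \<le> real n")
    case True
    have "(real k / 2) powr \<alpha> \<le> real n powr \<alpha>"
      using True assms(1) by (intro powr_mono2) auto
    also have "\<dots> \<le> real (k - j)"
      using assms(4,5) \<open>j \<le> n\<close> by (simp add: of_nat_diff)
    finally show ?thesis .
  next
    case False
    have "1 \<le> real k / 2" using assms(3,4) by auto
    then have "(real k / 2) powr \<alpha> \<le> (real k / 2) powr 1"
      using assms(2) by (intro powr_mono) auto
    also have "\<dots> \<le> real (k - j)"
      using False \<open>j \<le> n\<close> assms(4) by (simp add: of_nat_diff)
    finally show ?thesis .
  qed
qed

lemma no_later_visit_if_increments_exceed_log:
  fixes \<alpha> c :: real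
  assumes "0 < \<alpha>" "\<alpha> < 1" "0 < c"
    and escape: "\<And>k j. K \<le> k \<Longrightarrow> j \<le> k \<Longrightarrow> (real k / 2) powr \<alpha> \<le> real (k - j) \<Longrightarrow>
        c * ln (real k) < real_of_int (walk X k \<omega> - walk X j \<omega>)"
    and "max K 2 \<le> n" "n < k" "real j \<le> real n - real n powr \<alpha>"
    and "real_of_int \<bar>x\<bar> \<le> c * ln (real n)"
  shows "walk X k \<omega> \<noteq> walk X j \<omega> + x"
proof -
  have "j \<le> k"
    using assms(5-7) powr_ge_zero[of "real n" \<alpha>] by linarith
  moreover have "(real k / 2) powr \<alpha> \<le> real (k - j)"
    using half_powr_le_gap[OF assms(1,2) _ assms(6,7)] assms(5) by simp
  ultimately have "c * ln (real k) < real_of_int (walk X k \<omega> - walk X j \<omega>)"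
    using escape[of k j] assms(5,6) by simp
  moreover have "c * ln (real n) \<le> c * ln (real k)"
    using assms(3,5,6) by simp
  ultimately show ?thesis
    using assms(8) by linarith
qed

locale biased_walk = prob_space +
  fixes X :: "nat \<Rightarrow> 'a \<Rightarrow> int" and p q :: real
  assumes indep: "indep_vars (\<lambda>_. count_space UNIV) X {1..}"
    and prob_up: "\<And>i. i \<ge> 1 \<Longrightarrow> prob {\<omega> \<in> space M. X i \<omega> = 1} = p"
    and prob_down: "\<And>i. i \<ge> 1 \<Longrightarrow> prob {\<omega> \<in> space M. X i \<omega> = -1} = q"
    and p_plus_q: "p + q = 1"
begin

lemma measurable_step:
  "i \<ge> 1 \<Longrightarrow> X i \<in> measurable M (count_space UNIV)"
  using indep unfolding indep_vars_def by auto

lemma borel_measurable_step: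
  assumes "i \<ge> 1"
  shows "(\<lambda>\<omega>. real_of_int (X i \<omega>)) \<in> borel_measurable M"
  by (rule measurable_compose[OF measurable_step[OF assms]]) simp

lemma AE_step_pm1:
  assumes "i \<ge> 1"
  shows "AE \<omega> in M. X i \<omega> = 1 \<or> X i \<omega> = -1"
proof -
  define U where "U = {\<omega> \<in> space M. X i \<omega> = 1}"
  define D where "D = {\<omega> \<in> space M. X i \<omega> = -1}"
  have sets: "U \<in> sets M" "D \<in> sets M"
    unfolding U_def D_def using measurable_step[OF assms] by measurable
  have "prob (U \<union> D) = prob U + prob D"
    using sets by (intro finite_measure_Union) (auto simp: U_def D_def)
  also have "\<dots> = 1"
    using prob_up[OF assms] prob_down[OF assms] p_plus_q by (simp add: U_def D_def)
  finally have "AE \<omega> in M. \<omega> \<in> U \<union> D"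
    using prob_eq_1[of "U \<union> D"] sets by auto
  then show ?thesis by (auto simp: U_def D_def)
qed

lemma expectation_step:
  assumes "i \<ge> 1"
  shows "expectation (\<lambda>\<omega>. real_of_int (X i \<omega>)) = p - q"
proof -
  define U where "U = {\<omega> \<in> space M. X i \<omega> = 1}"
  define D where "D = {\<omega> \<in> space M. X i \<omega> = -1}"
  have sets: "U \<in> sets M" "D \<in> sets M"
    unfolding U_def D_def using measurable_step[OF assms] by measurable
  have "expectation (\<lambda>\<omega>. real_of_int (X i \<omega>))
      = expectation (\<lambda>\<omega>. indicator U \<omega> - indicator D \<omega> :: real)"
  proof (rule integral_cong_AE[OF borel_measurable_step[OF assms]])
    show "(\<lambda>\<omega>. indicator U \<omega> - indicator D \<omega> :: real) \<in> borel_measurable M"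
      using sets by measurable
    show "AE \<omega> in M. real_of_int (X i \<omega>) = indicator U \<omega> - indicator D \<omega>"
      using AE_step_pm1[OF assms] AE_space
      by eventually_elim (auto simp: U_def D_def indicator_def)
  qed
  also have "\<dots> = prob U - prob D"
    using sets sets.sets_into_space[OF sets(1)] sets.sets_into_space[OF sets(2)]
    by (subst Bochner_Integration.integral_diff)
       (auto simp: Int_absorb2 less_top[symmetric] intro!: integrable_real_indicator)
  also have "\<dots> = p - q"
    using prob_up[OF assms] prob_down[OF assms] by (simp add: U_def D_def)
  finally show ?thesis .
qed

lemma prob_increment_le_half_drift:
  assumes "q < p" "j < k" "2 * a \<le> real (k - j) * (p - q)"
  shows "prob {\<omega> \<in> space M. (\<Sum>i\<in>{Suc j..k}. real_of_int (X i \<omega>)) \<le> a}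
           \<le> exp (- ((p - q)\<^sup>2 / 8 * real (k - j)))"
proof -
  let ?I = "{Suc j..k}" and ?Y = "\<lambda>i \<omega>. real_of_int (X i \<omega>)"
  define m where "m = real (k - j)"
  define e where "e = m * (p - q) - a"
  interpret Hoeffding_ineq M ?I ?Y "\<lambda>_. -1" "\<lambda>_. 1" "m * (p - q)"
  proof unfold_locales
    show "indep_vars (\<lambda>_. borel) ?Y ?I"
      by (rule indep_vars_compose2[OF indep_vars_subset[OF indep]]) auto
    show "AE \<omega> in M. ?Y i \<omega> \<in> {-1..1}" if "i \<in> ?I" for i
      using AE_step_pm1[of i] that by (auto elim!: eventually_mono)
    have "(\<Sum>i\<in>?I. expectation (?Y i)) = (\<Sum>i\<in>?I. p - q)"
      by (intro sum.cong) (auto simp: expectation_step)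
    then show "m * (p - q) \<equiv> \<Sum>i\<in>?I. expectation (?Y i)" by (simp add: m_def)
  qed simp
  have m: "m > 0" using assms(2) by (simp add: m_def)
  have "2 * a \<le> m * (p - q)" using assms(3) by (simp add: m_def)
  then have e: "m * (p - q) / 2 \<le> e" "0 \<le> m * (p - q) / 2"
    using m assms(1) by (simp_all add: e_def)
  have four_m: "(\<Sum>i\<in>?I. (1 - (-1::real))\<^sup>2) = 4 * m" by (simp add: m_def)
  have "prob {\<omega> \<in> space M. (\<Sum>i\<in>?I. ?Y i \<omega>) \<le> m * (p - q) - e} \<le> exp (- 2 * e\<^sup>2 / (4 * m))"
    using Hoeffding_ineq_le[of e] e m unfolding four_m by linarith
  also have "\<dots> \<le> exp (- ((p - q)\<^sup>2 / 8 * m))"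
  proof -
    have "(m * (p - q) / 2)\<^sup>2 \<le> e\<^sup>2"
      using e by (intro power_mono)
    then have "(p - q)\<^sup>2 / 8 * m \<le> 2 * e\<^sup>2 / (4 * m)"
      using m by (simp add: field_simps power2_eq_square)
    then show ?thesis by simp
  qed
  finally have "prob {\<omega> \<in> space M. (\<Sum>i\<in>?I. ?Y i \<omega>) \<le> m * (p - q) - e}
      \<le> exp (- ((p - q)\<^sup>2 / 8 * m))" .
  moreover have "m * (p - q) - e = a" by (simp add: e_def)
  ultimately show ?thesis by (simp only: m_def)
qed

definition slow_increment_event :: "real \<Rightarrow> real \<Rightarrow> nat \<Rightarrow> 'a set" where
  "slow_increment_event \<alpha> c k =
     (\<Union>j\<in>{j. j \<le> k \<and> (real k / 2) powr \<alpha> \<le> real (k - j)}.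
        {\<omega> \<in> space M. (\<Sum>i\<in>{Suc j..k}. real_of_int (X i \<omega>)) \<le> c * ln (real k)})"

lemma sets_increment_le:
  "{\<omega> \<in> space M. (\<Sum>i\<in>{Suc j..k}. real_of_int (X i \<omega>)) \<le> a} \<in> sets M"
proof -
  have [measurable]: "(\<lambda>\<omega>. \<Sum>i\<in>{Suc j..k}. real_of_int (X i \<omega>)) \<in> borel_measurable M"
    by (intro borel_measurable_sum borel_measurable_step) auto
  show ?thesis by measurable
qed

lemma sets_slow_increment_event: "slow_increment_event \<alpha> c k \<in> sets M"
proof -
  have "finite {j. j \<le> k \<and> (real k / 2) powr \<alpha> \<le> real (k - j)}"
    by (rule finite_subset[of _ "{..k}"]) auto
  then show ?thesis
    unfolding slow_increment_event_def by (intro sets.finite_UN sets_increment_le) auto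
qed

lemma prob_slow_increment_event_le:
  assumes "q < p" "1 \<le> k" "2 * c * ln (real k) \<le> (p - q) * (real k / 2) powr \<alpha>"
  shows "prob (slow_increment_event \<alpha> c k) \<le> (1 + real k) * exp (- ((p - q)\<^sup>2 / 8 * (real k / 2) powr \<alpha>))"
proof -
  define g where "g = (real k / 2) powr \<alpha>"
  define r where "r = (p - q)\<^sup>2 / 8"
  define J where "J = {j. j \<le> k \<and> g \<le> real (k - j)}"
  define A where "A j = {\<omega> \<in> space M. (\<Sum>i\<in>{Suc j..k}. real_of_int (X i \<omega>)) \<le> c * ln (real k)}"
    for j
  have J: "finite J" "J \<subseteq> {..k}"
    by (auto simp: J_def intro: finite_subset[of _ "{..k}"])
  have prob_A: "prob (A j) \<le> exp (- (r * g))" if "j \<in> J" for j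
  proof -
    have gap: "g \<le> real (k - j)" "j \<le> k" using that by (auto simp: J_def)
    moreover have "g > 0" using assms(2) by (simp add: g_def)
    ultimately have "j < k" by (cases "j = k") auto
    have "(p - q) * g \<le> real (k - j) * (p - q)"
      using gap(1) assms(1) by (simp add: mult.commute)
    then have "2 * (c * ln (real k)) \<le> real (k - j) * (p - q)"
      using assms(3) unfolding g_def by linarith
    then have "prob (A j) \<le> exp (- (r * real (k - j)))"
      unfolding A_def r_def by (rule prob_increment_le_half_drift[OF assms(1) \<open>j < k\<close>])
    also have "\<dots> \<le> exp (- (r * g))"
      using gap assms(1) by (simp add: r_def)
    finally show ?thesis .
  qed
  have "prob (slow_increment_event \<alpha> c k) \<le> (\<Sum>j\<in>J. prob (A j))"
    unfolding slow_increment_event_def A_def[symmetric] g_def[symmetric] J_def[symmetric]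
    using J(1) by (intro finite_measure_subadditive_finite) (auto simp: A_def sets_increment_le)
  also have "\<dots> \<le> real (card J) * exp (- (r * g))"
    using sum_mono[OF prob_A] by simp
  also have "\<dots> \<le> real (card {..k}) * exp (- (r * g))"
    using card_mono[OF _ J(2)] by (intro mult_right_mono) auto
  finally show ?thesis by (simp add: r_def g_def)
qed

lemma AE_eventually_increments_exceed_log:
  fixes \<alpha> c :: real
  assumes "q < p" "0 < \<alpha>"
  shows "AE \<omega> in M. \<forall>\<^sub>F k in sequentially. \<forall>j\<le>k. (real k / 2) powr \<alpha> \<le> real (k - j) \<longrightarrow>
           c * ln (real k) < real_of_int (walk X k \<omega> - walk X j \<omega>)"
proof -
  let ?E = "slow_increment_event \<alpha> c"
  have rate: "(p - q)\<^sup>2 / 8 > 0" "p - q > 0" using assms(1) by auto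
  have "\<forall>\<^sub>F k in sequentially. 2 * c * ln (real k) \<le> (p - q) * (real k / 2) powr \<alpha>"
    using assms(2) rate by real_asymp
  moreover have "\<forall>\<^sub>F k in sequentially.
      (1 + real k) * exp (- ((p - q)\<^sup>2 / 8 * (real k / 2) powr \<alpha>)) \<le> 1 / (real k)\<^sup>2"
    using assms(2) rate by real_asymp
  ultimately have "\<forall>\<^sub>F k in sequentially. norm (prob (?E k)) \<le> 1 / (real k)\<^sup>2"
    using eventually_ge_at_top[of 1]
  proof eventually_elim
    case (elim k)
    then show ?case using prob_slow_increment_event_le[OF assms(1) elim(3,1)] by simp
  qed
  moreover have "summable (\<lambda>k. 1 / (real k)\<^sup>2)"
    using inverse_power_summable[of 2, where 'a=real] by (simp add: inverse_eq_divide)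
  ultimately have "summable (\<lambda>k. prob (?E k))"
    by (rule summable_comparison_test_ev)
  then have "AE \<omega> in M. \<forall>\<^sub>F k in sequentially. \<omega> \<in> space M - ?E k"
    by (intro borel_cantelli_AE1 sets_slow_increment_event) (auto simp: less_top[symmetric])
  then show ?thesis
  proof (rule eventually_mono)
    fix \<omega> assume "\<forall>\<^sub>F k in sequentially. \<omega> \<in> space M - ?E k"
    then show "\<forall>\<^sub>F k in sequentially. \<forall>j\<le>k. (real k / 2) powr \<alpha> \<le> real (k - j) \<longrightarrow>
        c * ln (real k) < real_of_int (walk X k \<omega> - walk X j \<omega>)"
    proof (rule eventually_mono, intro allI impI)
      fix k j assume "\<omega> \<in> space M - ?E k" "j \<le> k" "(real k / 2) powr \<alpha> \<le> real (k - j)"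
      then have "c * ln (real k) < (\<Sum>i\<in>{Suc j..k}. real_of_int (X i \<omega>))"
        unfolding slow_increment_event_def by (auto simp del: of_nat_diff)
      then show "c * ln (real k) < real_of_int (walk X k \<omega> - walk X j \<omega>)"
        using walk_diff[OF \<open>j \<le> k\<close>, of X \<omega>] by simp
    qed
  qed
qed

end

theorem lemma7p2:
  fixes M :: "'a measure" and X :: "nat \<Rightarrow> 'a \<Rightarrow> int"
    and p q \<alpha> c :: real
  assumes "prob_space M"
    and "0 < q" and "q < p" and "p < 1" and "p + q = 1"
    and "prob_space.indep_vars M (\<lambda>_. count_space UNIV) X {1..}"
    and "\<And>i. i \<ge> 1 \<Longrightarrow> measure M {\<omega> \<in> space M. X i \<omega> = 1} = p"
    and "\<And>i. i \<ge> 1 \<Longrightarrow> measure M {\<omega> \<in> space M. X i \<omega> = -1} = q"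
    and "0 < \<alpha>" and "\<alpha> < 1" and "0 < c"
  shows "AE \<omega> in M. \<exists>n0::nat. \<forall>n\<ge>n0. \<forall>j::nat. \<forall>x::int.
           real j \<le> real n - real n powr \<alpha> \<longrightarrow> real_of_int \<bar>x\<bar> \<le> c * ln (real n) \<longrightarrow>
           enat (loctime X (walk X j \<omega> + x) n \<omega>) = loctime_inf X (walk X j \<omega> + x) \<omega>"
proof -
  interpret biased_walk M X p q
    using assms(1,5-8) by (intro biased_walk.intro biased_walk_axioms.intro)
  show ?thesis
    using AE_eventually_increments_exceed_log[OF assms(3,9), of c]
  proof (rule eventually_mono)
    fix \<omega> assume "\<forall>\<^sub>F k in sequentially. \<forall>j\<le>k. (real k / 2) powr \<alpha> \<le> real (k - j) \<longrightarrow>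
           c * ln (real k) < real_of_int (walk X k \<omega> - walk X j \<omega>)"
    then obtain K where K: "\<And>k j. K \<le> k \<Longrightarrow> j \<le> k \<Longrightarrow> (real k / 2) powr \<alpha> \<le> real (k - j) \<Longrightarrow>
        c * ln (real k) < real_of_int (walk X k \<omega> - walk X j \<omega>)"
      by (auto simp: eventually_sequentially)
    show "\<exists>n0. \<forall>n\<ge>n0. \<forall>j x. real j \<le> real n - real n powr \<alpha> \<longrightarrow>
        real_of_int \<bar>x\<bar> \<le> c * ln (real n) \<longrightarrow>
        enat (loctime X (walk X j \<omega> + x) n \<omega>) = loctime_inf X (walk X j \<omega> + x) \<omega>"
    proof (intro exI[of _ "max K 2"] allI impI)
      fix n j x
      assume "max K 2 \<le> n" "real j \<le> real n - real n powr \<alpha>" "real_of_int \<bar>x\<bar> \<le> (c::real) * ln (real n)"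
      then have "walk X k \<omega> \<noteq> walk X j \<omega> + x" if "n < k" for k
        using no_later_visit_if_increments_exceed_log[OF assms(9-11) K] that by blast
      then show "enat (loctime X (walk X j \<omega> + x) n \<omega>) = loctime_inf X (walk X j \<omega> + x) \<omega>"
        by (rule loctime_inf_eq_loctime_if_no_later_visit[symmetric])
    qed
  qed
qed

end
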